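(* Let $K_1,\dots,K_n\subset\mathbb R^d$ be convex bodies such that $K:=K_1\cap\dots\cap K_n$ satisfies $\dim(K)<d$. Suppose $x\in K$ lies in the boundary of every $K_i$, $i=1,\dots,n$. Then there exist nonempty finite collections of closed half-spaces $\{H^+(i,j)\}_{j\in J_i}$, $i=1,\dots,n$, such that for all $i$ and $j\in J_i$ the boundary hyperplane of $H^+(i,j)$ is a supporting hyperplane of $K_i$ at $x$ (with $K_i\subset H^+(i,j)$), and $$\dim\Big(\bigcap_{j\in J_1}H^+(1,j)\cap\dots\cap\bigcap_{j\in J_n}H^+(n,j)\Big)<d.$$
   Context: A convex body is a nonempty compact convex subset of $\mathbb R^d$; the dimension of a convex set is the dimension of its affine hull. *)

theory Defs
  imports "HOL-Analysis.Analysis"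
begin

definition convex_body :: "'a::euclidean_space set \<Rightarrow> bool" where
  "convex_body K \<longleftrightarrow> K \<noteq> {} \<and> compact K \<and> convex K"

definition closed_halfspace :: "'a::euclidean_space \<Rightarrow> real \<Rightarrow> 'a set" where
  "closed_halfspace a b = {y. a \<bullet> y \<le> b}"

definition supporting_halfspace_at :: "'a::euclidean_space set \<Rightarrow> 'a \<Rightarrow> 'a \<Rightarrow> real \<Rightarrow> bool" where
  "supporting_halfspace_at K x a b \<longleftrightarrow>
     a \<noteq> 0 \<and> a \<bullet> x = b \<and> K \<subseteq> closed_halfspace a b"

end

theory Submission
  imports Defs
begin

(*
  If some K_i has empty interior, it lies in a hyperplane through x, and the two half-spaces
  bounded by that hyperplane already cut the intersection down to the hyperplane. Otherwise the
  interiors U_i are open convex sets, all with x in their closure, whose intersection is empty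
  because K has empty interior. By the Dubovitskii-Milyutin theorem there are normals a_i of
  U_i (equivalently of K_i) at x, not all zero, with a_1 + ... + a_n = 0; the half-spaces
  a_i . y <= a_i . x then meet only where a_i . y = a_i . x for all i. Dubovitskii-Milyutin
  follows by induction on the number of sets from the rule N(A \<inter> B) = N(A) + N(B) for normal
  cones of open convex sets with a common closure point, which in turn comes from separating a
  hypograph over A from a half-cylinder over B in R^d \<times> R.
*)

definition normal_cone :: "'a::euclidean_space set \<Rightarrow> 'a \<Rightarrow> 'a set" where
  "normal_cone S x = {a. \<forall>y\<in>S. a \<bullet> y \<le> a \<bullet> x}"

lemma inner_le_at_closure_point:
  fixes S :: "'a::euclidean_space set"
  assumes "\<And>y. y \<in> S \<Longrightarrow> a \<bullet> y \<le> \<beta>" "x \<in> closure S"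
  shows "a \<bullet> x \<le> \<beta>"
  using closure_minimal[OF _ closed_halfspace_le, of S a \<beta>] assms by blast

lemma inner_ge_at_closure_point:
  fixes S :: "'a::euclidean_space set"
  assumes "\<And>y. y \<in> S \<Longrightarrow> \<beta> \<le> a \<bullet> y" "x \<in> closure S"
  shows "\<beta> \<le> a \<bullet> x"
  using inner_le_at_closure_point[of S "- a" "- \<beta>" x] assms by simp

lemma normal_cone_closure [simp]: "normal_cone (closure S) x = normal_cone S x"
  using closure_subset by (fastforce simp: normal_cone_def intro: inner_le_at_closure_point)

lemma normal_cone_scaleR:
  assumes "a \<in> normal_cone S x" "0 \<le> r"
  shows "r *\<^sub>R a \<in> normal_cone S x"
  using assms by (auto simp: normal_cone_def mult_left_mono)

lemma normal_cone_open_eq_0: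
  fixes S :: "'a::euclidean_space set"
  assumes "open S" "x \<in> S" "a \<in> normal_cone S x"
  shows "a = 0"
proof (rule ccontr)
  assume "a \<noteq> 0"
  obtain \<epsilon> where "\<epsilon> > 0" "ball x \<epsilon> \<subseteq> S"
    using assms(1,2) open_contains_ball by blast
  define y where "y = x + (\<epsilon> / 2 / norm a) *\<^sub>R a"
  have "y \<in> S"
    using \<open>\<epsilon> > 0\<close> \<open>a \<noteq> 0\<close> \<open>ball x \<epsilon> \<subseteq> S\<close> by (auto simp: y_def dist_norm)
  moreover have "a \<bullet> y = a \<bullet> x + \<epsilon> / 2 * norm a"
    using \<open>a \<noteq> 0\<close> by (simp add: y_def inner_add_right power2_norm_eq_inner[symmetric] power2_eq_square)
  moreover have "\<epsilon> / 2 * norm a > 0"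
    using \<open>\<epsilon> > 0\<close> \<open>a \<noteq> 0\<close> by simp
  ultimately show False
    using assms(3) by (fastforce simp: normal_cone_def)
qed

lemma nonneg_slope_if_eventually_above:
  fixes p s \<beta> :: real
  assumes above: "\<And>t. 0 < t \<Longrightarrow> \<beta> \<le> p + s * t"
  shows "0 \<le> s" "\<beta> \<le> p"
proof -
  show "0 \<le> s"
  proof (rule ccontr)
    assume "\<not> 0 \<le> s"
    define t where "t = (\<bar>p - \<beta>\<bar> + 1) / - s"
    have "0 < t" "s * t = - (\<bar>p - \<beta>\<bar> + 1)"
      using \<open>\<not> 0 \<le> s\<close> by (auto simp: t_def intro!: divide_pos_neg)
    then show False
      using above[of t] abs_ge_self[of "p - \<beta>"] by linarith
  qed
  show "\<beta> \<le> p"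
  proof (rule ccontr)
    assume "\<not> \<beta> \<le> p"
    define t where "t = (\<beta> - p) / (s + 1)"
    have "0 < t" "s * t < \<beta> - p"
      using \<open>\<not> \<beta> \<le> p\<close> \<open>0 \<le> s\<close> by (simp_all add: t_def field_simps)
    then show False using above[of t] by linarith
  qed
qed

lemma separating_normals_at_common_closure_point:
  fixes A B :: "'a::euclidean_space set"
  assumes "convex A" "convex B" "A \<noteq> {}" "B \<noteq> {}" "A \<inter> B = {}"
    and "x \<in> closure A" "x \<in> closure B"
  obtains e where "e \<noteq> 0" "e \<in> normal_cone A x" "- e \<in> normal_cone B x"
proof -
  obtain e \<beta> where e: "e \<noteq> 0" "\<And>y. y \<in> A \<Longrightarrow> e \<bullet> y \<le> \<beta>" "\<And>z. z \<in> B \<Longrightarrow> \<beta> \<le> e \<bullet> z"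
    using separating_hyperplane_sets[OF assms(1-5)] by blast
  have "e \<bullet> x = \<beta>"
    using inner_le_at_closure_point[OF e(2) assms(6)] inner_ge_at_closure_point[OF e(3) assms(7)]
    by linarith
  then show thesis
    using that e by (auto simp: normal_cone_def)
qed

lemma normal_cone_Int_separation:
  fixes A B :: "'a::euclidean_space set"
  assumes "convex A" "convex B" "w \<in> A \<inter> B" "b \<in> normal_cone (A \<inter> B) x"
  obtains c s \<beta> where "(c, s) \<noteq> 0" "0 \<le> s"
    "\<And>y. y \<in> A \<Longrightarrow> c \<bullet> y + s * (b \<bullet> y - b \<bullet> x) \<le> \<beta>" "\<And>z. z \<in> B \<Longrightarrow> \<beta> \<le> c \<bullet> z"
proof -
  \<comment> \<open>Separate the hypograph of y \<mapsto> b \<bullet> (y - x) over A from the open upper half-cylinder over B.\<close>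
  define S :: "('a \<times> real) set" where "S = (A \<times> UNIV) \<inter> {p. (- b, 1) \<bullet> p \<le> - (b \<bullet> x)}"
  define T where "T = B \<times> {0 :: real <..}"
  have "S \<inter> T = {}"
  proof (rule ccontr)
    assume "S \<inter> T \<noteq> {}"
    then obtain y t where "y \<in> A \<inter> B" "0 < t" "t \<le> b \<bullet> y - b \<bullet> x"
      by (fastforce simp: S_def T_def)
    moreover have "b \<bullet> y \<le> b \<bullet> x"
      using assms(4) \<open>y \<in> A \<inter> B\<close> by (simp add: normal_cone_def)
    ultimately show False
      by linarith
  qed
  moreover have "(w, b \<bullet> w - b \<bullet> x) \<in> S" "(w, 1) \<in> T"
    using assms(3) by (auto simp: S_def T_def)
  moreover have "convex S" "convex T"
    using assms(1,2) by (auto simp: S_def T_def intro!: convex_Int convex_Times convex_halfspace_le)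
  ultimately obtain p \<beta> where p: "p \<noteq> 0" "\<forall>q\<in>S. p \<bullet> q \<le> \<beta>" "\<forall>q\<in>T. \<beta> \<le> p \<bullet> q"
    using separating_hyperplane_sets[of S T] by blast
  obtain c s where cs: "p = (c, s)"
    by (cases p)
  have onA: "c \<bullet> y + s * (b \<bullet> y - b \<bullet> x) \<le> \<beta>" if "y \<in> A" for y
  proof -
    have "(y, b \<bullet> y - b \<bullet> x) \<in> S"
      using that by (simp add: S_def)
    then show ?thesis
      using p(2) cs by (fastforce simp: inner_diff_right)
  qed
  have "0 \<le> s \<and> \<beta> \<le> c \<bullet> z" if "z \<in> B" for z
  proof -
    have "\<beta> \<le> c \<bullet> z + s * t" if "0 < t" for t
      using p(3) \<open>z \<in> B\<close> that cs by (auto simp: T_def)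
    then show ?thesis
      using nonneg_slope_if_eventually_above by blast
  qed
  then show thesis
    using that[of c s \<beta>] p(1) cs onA assms(3) by blast
qed

lemma normal_cone_Int_open_convex:
  fixes A B :: "'a::euclidean_space set"
  assumes "open A" "convex A" "convex B" "A \<inter> B \<noteq> {}"
    and "x \<in> closure A" "x \<in> closure B" "b \<in> normal_cone (A \<inter> B) x"
  shows "\<exists>c. c \<in> normal_cone A x \<and> b - c \<in> normal_cone B x"
proof -
  obtain w where w: "w \<in> A \<inter> B"
    using assms(4) by blast
  obtain c s \<beta> where cs: "(c, s) \<noteq> 0" "0 \<le> s"
    and onA: "\<And>y. y \<in> A \<Longrightarrow> c \<bullet> y + s * (b \<bullet> y - b \<bullet> x) \<le> \<beta>"
    and onB: "\<And>z. z \<in> B \<Longrightarrow> \<beta> \<le> c \<bullet> z"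
    using normal_cone_Int_separation[OF assms(2,3) w assms(7)] by blast
  have "(c + s *\<^sub>R b) \<bullet> y \<le> \<beta> + s * (b \<bullet> x)" if "y \<in> A" for y
    using onA[OF that] by (simp add: inner_add_left algebra_simps)
  then have "c \<bullet> x \<le> \<beta>"
    using inner_le_at_closure_point[of A _ _ x] assms(5) by (fastforce simp: inner_add_left)
  moreover have "\<beta> \<le> c \<bullet> x"
    using inner_ge_at_closure_point[of B \<beta> c x] onB assms(6) by blast
  ultimately have "c \<bullet> x = \<beta>"
    by linarith
  then have cA: "c + s *\<^sub>R b \<in> normal_cone A x" and cB: "- c \<in> normal_cone B x"
    using onA onB by (auto simp: normal_cone_def inner_add_left algebra_simps)
  \<comment> \<open>The hyperplane is not vertical: otherwise c would be a nonzero normal of the open set A at w.\<close>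
  have "s \<noteq> 0"
  proof
    assume "s = 0"
    moreover have "\<beta> \<le> c \<bullet> w"
      using onB w by blast
    ultimately have "c \<in> normal_cone A w"
      using onA by (fastforce simp: normal_cone_def intro: order_trans)
    then have "c = 0"
      using normal_cone_open_eq_0 assms(1) w by blast
    then show False
      using cs(1) \<open>s = 0\<close> by (simp add: zero_prod_def)
  qed
  with \<open>0 \<le> s\<close> have "(1 / s) *\<^sub>R (c + s *\<^sub>R b) \<in> normal_cone A x"
    "(1 / s) *\<^sub>R (- c) \<in> normal_cone B x"
    using normal_cone_scaleR[OF cA] normal_cone_scaleR[OF cB] by simp_all
  moreover have "b - (1 / s) *\<^sub>R (c + s *\<^sub>R b) = (1 / s) *\<^sub>R (- c)"
    using \<open>s \<noteq> 0\<close> by (simp add: algebra_simps)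
  ultimately show ?thesis
    by metis
qed

lemma open_convex_Inter_closure_point:
  fixes U :: "'i \<Rightarrow> 'a::euclidean_space set"
  assumes "finite I" "\<And>i. i \<in> I \<Longrightarrow> open (U i)" "\<And>i. i \<in> I \<Longrightarrow> convex (U i)"
    and "\<And>i. i \<in> I \<Longrightarrow> x \<in> closure (U i)" "(\<Inter>i\<in>I. U i) \<noteq> {}"
  shows "open (\<Inter>i\<in>I. U i)" "convex (\<Inter>i\<in>I. U i)" "x \<in> closure (\<Inter>i\<in>I. U i)"
proof -
  show "open (\<Inter>i\<in>I. U i)" "convex (\<Inter>i\<in>I. U i)"
    using assms by (auto intro: open_INT convex_INT)
  have "closure (\<Inter>(U ` I)) = \<Inter>(closure ` U ` I)"
    using closure_Inter_convex_open[of "U ` I"] assms by auto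
  then show "x \<in> closure (\<Inter>i\<in>I. U i)"
    using assms(4) by auto
qed

lemma sum_fun_upd_notin: "j \<notin> I \<Longrightarrow> sum (a(j := v)) I = sum a I"
  by (rule sum.cong) auto

lemma normal_cone_Inter_open_convex:
  fixes U :: "'i \<Rightarrow> 'a::euclidean_space set"
  assumes "finite I" "\<And>i. i \<in> I \<Longrightarrow> open (U i)" "\<And>i. i \<in> I \<Longrightarrow> convex (U i)"
    and "\<And>i. i \<in> I \<Longrightarrow> x \<in> closure (U i)" "(\<Inter>i\<in>I. U i) \<noteq> {}"
    and "b \<in> normal_cone (\<Inter>i\<in>I. U i) x"
  shows "\<exists>a. (\<forall>i\<in>I. a i \<in> normal_cone (U i) x) \<and> (\<Sum>i\<in>I. a i) = b"
  using assms(1) assms(2-)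
proof (induction I arbitrary: b rule: finite_induct)
  case empty
  then have "b = 0"
    using normal_cone_open_eq_0[of UNIV x b] by simp
  then show ?case
    by simp
next
  case (insert j I)
  let ?W = "\<Inter>i\<in>I. U i"
  have W: "open ?W" "convex ?W" "x \<in> closure ?W"
    using open_convex_Inter_closure_point[of I U x] insert by auto
  obtain c where "c \<in> normal_cone ?W x" "b - c \<in> normal_cone (U j) x"
    using normal_cone_Int_open_convex[OF W(1,2), of "U j" x b] W(3) insert.prems
    by (auto simp: Int_commute)
  moreover obtain a where "\<forall>i\<in>I. a i \<in> normal_cone (U i) x" "(\<Sum>i\<in>I. a i) = c"
    using insert.IH[OF _ _ _ _ \<open>c \<in> normal_cone ?W x\<close>] insert.prems by auto
  ultimately show ?case
    using insert.hyps sum_fun_upd_notin[of j I a "b - c"]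
    by (intro exI[of _ "a(j := b - c)"]) auto
qed

theorem Dubovitskii_Milyutin:
  fixes U :: "'i \<Rightarrow> 'a::euclidean_space set"
  assumes "finite I" "\<And>i. i \<in> I \<Longrightarrow> open (U i)" "\<And>i. i \<in> I \<Longrightarrow> convex (U i)"
    and "\<And>i. i \<in> I \<Longrightarrow> x \<in> closure (U i)" "(\<Inter>i\<in>I. U i) = {}"
  shows "\<exists>a. (\<forall>i\<in>I. a i \<in> normal_cone (U i) x) \<and> (\<Sum>i\<in>I. a i) = 0 \<and> (\<exists>i\<in>I. a i \<noteq> 0)"
  using assms(1) assms(2-)
proof (induction I rule: finite_induct)
  case empty
  then show ?case
    by simp
next
  case (insert j I)
  let ?W = "\<Inter>i\<in>I. U i"
  show ?case
  proof (cases "?W = {}")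
    case True
    then obtain a where "\<forall>i\<in>I. a i \<in> normal_cone (U i) x" "(\<Sum>i\<in>I. a i) = 0" "\<exists>i\<in>I. a i \<noteq> 0"
      using insert.IH insert.prems by auto
    moreover have "0 \<in> normal_cone (U j) x"
      by (simp add: normal_cone_def)
    ultimately show ?thesis
      using insert.hyps sum_fun_upd_notin[of j I a 0]
      by (intro exI[of _ "a(j := 0)"]) auto
  next
    case False
    have W: "convex ?W" "x \<in> closure ?W"
      using open_convex_Inter_closure_point[of I U x] insert False by auto
    have "U j \<noteq> {}"
      using insert.prems(3)[of j] by auto
    moreover have "?W \<inter> U j = {}"
      using insert.prems by auto
    ultimately obtain e where e: "e \<noteq> 0" "e \<in> normal_cone ?W x" "- e \<in> normal_cone (U j) x"
      using separating_normals_at_common_closure_point[OF W(1) _ False, of "U j" x] W(2) insert.prems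
      by auto
    obtain a where "\<forall>i\<in>I. a i \<in> normal_cone (U i) x" "(\<Sum>i\<in>I. a i) = e"
      using normal_cone_Inter_open_convex[OF insert.hyps(1) _ _ _ False e(2)] insert.prems by auto
    then show ?thesis
      using insert.hyps e sum_fun_upd_notin[of j I a "- e"]
      by (intro exI[of _ "a(j := - e)"]) auto
  qed
qed

lemma normal_cone_empty_interior:
  fixes K :: "'a::euclidean_space set"
  assumes "convex K" "interior K = {}" "x \<in> K"
  obtains e where "e \<noteq> 0" "e \<in> normal_cone K x" "- e \<in> normal_cone K x"
proof -
  obtain e b where "e \<noteq> 0" "K \<subseteq> {y. e \<bullet> y = b}"
    using empty_interior_subset_hyperplane[OF assms(1,2)] by blast
  then have "\<forall>y\<in>K. e \<bullet> y = e \<bullet> x"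
    using assms(3) by auto
  then show thesis
    using that[of e] \<open>e \<noteq> 0\<close> by (simp add: normal_cone_def)
qed

lemma exists_nonzero_normal_at_frontier:
  fixes K :: "'a::euclidean_space set"
  assumes "convex K" "x \<in> K" "x \<in> frontier K"
  obtains a where "a \<noteq> 0" "a \<in> normal_cone K x"
proof (cases "interior K = {}")
  case True
  then show thesis
    using normal_cone_empty_interior[OF assms(1) _ assms(2)] that by blast
next
  case False
  then have "x \<notin> rel_interior K"
    using assms(3) rel_interior_nonempty_interior[OF False] by (simp add: frontier_def)
  moreover have "x \<in> closure K"
    using assms(2) closure_subset by blast
  ultimately obtain a where "a \<noteq> 0" "\<And>y. y \<in> closure K \<Longrightarrow> a \<bullet> x \<le> a \<bullet> y"
    using supporting_hyperplane_relative_frontier[OF assms(1)] by metis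
  then show thesis
    using that[of "- a"] closure_subset by (auto simp: normal_cone_def)
qed

lemma Inter_halfspaces_subset_hyperplane:
  assumes "finite I" "(\<Sum>i\<in>I. a i) = 0" "m \<in> I"
  shows "(\<Inter>i\<in>I. {y. a i \<bullet> y \<le> a i \<bullet> x}) \<subseteq> {y. a m \<bullet> y = a m \<bullet> x}"
proof
  fix y
  assume "y \<in> (\<Inter>i\<in>I. {y. a i \<bullet> y \<le> a i \<bullet> x})"
  then have nonneg: "\<forall>i\<in>I. 0 \<le> a i \<bullet> x - a i \<bullet> y"
    by auto
  have "(\<Sum>i\<in>I. a i \<bullet> x - a i \<bullet> y) = (\<Sum>i\<in>I. a i) \<bullet> x - (\<Sum>i\<in>I. a i) \<bullet> y"
    by (simp add: inner_sum_left sum_subtractf)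
  then have "(\<Sum>i\<in>I. a i \<bullet> x - a i \<bullet> y) = 0"
    using assms(2) by simp
  then have "\<forall>i\<in>I. a i \<bullet> x - a i \<bullet> y = 0"
    using sum_nonneg_eq_0_iff[OF assms(1), of "\<lambda>i. a i \<bullet> x - a i \<bullet> y"] nonneg by simp
  then have "a m \<bullet> x - a m \<bullet> y = 0"
    using assms(3) by blast
  then show "y \<in> {y. a m \<bullet> y = a m \<bullet> x}"
    by simp
qed

lemma normals_of_lowdim_Inter:
  fixes K :: "'i \<Rightarrow> 'a::euclidean_space set"
  assumes "finite I" "\<And>i. i \<in> I \<Longrightarrow> convex (K i)" "x \<in> (\<Inter>i\<in>I. K i)"
    and "aff_dim (\<Inter>i\<in>I. K i) < DIM('a)"
  shows "\<exists>G e. e \<noteq> 0 \<and> (\<forall>i\<in>I. finite (G i) \<and> G i \<subseteq> normal_cone (K i) x) \<and>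
           (\<Inter>i\<in>I. \<Inter>g\<in>G i. {y. g \<bullet> y \<le> g \<bullet> x}) \<subseteq> {y. e \<bullet> y = e \<bullet> x}"
proof (cases "\<exists>j\<in>I. interior (K j) = {}")
  case True
  then obtain j where j: "j \<in> I" "interior (K j) = {}"
    by blast
  then obtain e where e: "e \<noteq> 0" "e \<in> normal_cone (K j) x" "- e \<in> normal_cone (K j) x"
    using normal_cone_empty_interior[OF assms(2)] assms(3) by blast
  have "(\<Inter>i\<in>I. \<Inter>g\<in>(if i = j then {e, - e} else {}). {y. g \<bullet> y \<le> g \<bullet> x}) \<subseteq> {y. e \<bullet> y = e \<bullet> x}"
  proof
    fix y
    assume "y \<in> (\<Inter>i\<in>I. \<Inter>g\<in>(if i = j then {e, - e} else {}). {y. g \<bullet> y \<le> g \<bullet> x})"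
    then have "e \<bullet> y \<le> e \<bullet> x" "- e \<bullet> y \<le> - e \<bullet> x"
      using j(1) by fastforce+
    then show "y \<in> {y. e \<bullet> y = e \<bullet> x}"
      by simp
  qed
  then show ?thesis
    using e by (intro exI[of _ "\<lambda>i. if i = j then {e, - e} else {}"] exI[of _ e]) auto
next
  case False
  have x_in_closure_interior: "x \<in> closure (interior (K i))" if "i \<in> I" for i
    using convex_closure_interior[of "K i"] assms(2,3) False that closure_subset by blast
  have "open (\<Inter>i\<in>I. interior (K i))"
    using assms(1) by (auto intro: open_INT)
  then have "(\<Inter>i\<in>I. interior (K i)) \<subseteq> interior (\<Inter>i\<in>I. K i)"
    by (rule interior_maximal[rotated]) (auto dest: interior_subset[THEN subsetD])
  moreover have "interior (\<Inter>i\<in>I. K i) = {}"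
    using assms(4) by (intro low_dim_interior) simp
  ultimately have "(\<Inter>i\<in>I. interior (K i)) = {}"
    by blast
  then obtain a m where a: "\<forall>i\<in>I. a i \<in> normal_cone (interior (K i)) x" "(\<Sum>i\<in>I. a i) = 0"
    and m: "m \<in> I" "a m \<noteq> 0"
    using Dubovitskii_Milyutin[of I "\<lambda>i. interior (K i)" x] assms(1,2) x_in_closure_interior
    by (auto simp: convex_interior)
  have "normal_cone (interior (K i)) x = normal_cone (K i) x" if "i \<in> I" for i
    using convex_closure_interior[OF assms(2)[OF that]] False that by (metis normal_cone_closure)
  with a(1) have "a i \<in> normal_cone (K i) x" if "i \<in> I" for i
    using that by blast
  then show ?thesis
    using m Inter_halfspaces_subset_hyperplane[OF assms(1) a(2) m(1)]
    by (intro exI[of _ "\<lambda>i. {a i}"] exI[of _ "a m"]) auto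
qed

theorem theorem2p19:
  fixes K :: "nat \<Rightarrow> 'a::euclidean_space set" and n :: nat and x :: 'a
  assumes bodies: "\<And>i. i \<in> {1..n} \<Longrightarrow> convex_body (K i)"
    and lowdim: "aff_dim (\<Inter>i\<in>{1..n}. K i) < int DIM('a)"
    and xK: "x \<in> (\<Inter>i\<in>{1..n}. K i)"
    and xbd: "\<And>i. i \<in> {1..n} \<Longrightarrow> x \<in> frontier (K i)"
  shows "\<exists>H :: nat \<Rightarrow> ('a \<times> real) set.
           (\<forall>i\<in>{1..n}. finite (H i) \<and> H i \<noteq> {} \<and>
               (\<forall>(a, b)\<in>H i. supporting_halfspace_at (K i) x a b)) \<and>
           aff_dim (\<Inter>i\<in>{1..n}. \<Inter>(a, b)\<in>H i. closed_halfspace a b) < int DIM('a)"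
proof -
  have convex: "convex (K i)" if "i \<in> {1..n}" for i
    using bodies[OF that] by (simp add: convex_body_def)
  have "\<exists>a. a \<noteq> 0 \<and> a \<in> normal_cone (K i) x" if "i \<in> {1..n}" for i
    using exists_nonzero_normal_at_frontier[OF convex[OF that] _ xbd[OF that]] xK that by blast
  then obtain s where s: "\<And>i. i \<in> {1..n} \<Longrightarrow> s i \<noteq> 0 \<and> s i \<in> normal_cone (K i) x"
    by metis
  obtain G e where e: "e \<noteq> 0" and G: "\<forall>i\<in>{1..n}. finite (G i) \<and> G i \<subseteq> normal_cone (K i) x"
    and cut: "(\<Inter>i\<in>{1..n}. \<Inter>g\<in>G i. {y. g \<bullet> y \<le> g \<bullet> x}) \<subseteq> {y. e \<bullet> y = e \<bullet> x}"
    using normals_of_lowdim_Inter[OF finite_atLeastAtMost convex xK lowdim] by blast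
  \<comment> \<open>G i may be empty or contain 0: adding s i and dropping 0 gives nonempty families of half-spaces.\<close>
  define H where "H i = (\<lambda>a. (a, a \<bullet> x)) ` insert (s i) (G i - {0})" for i
  have supporting: "\<forall>i\<in>{1..n}. finite (H i) \<and> H i \<noteq> {} \<and>
      (\<forall>(a, b)\<in>H i. supporting_halfspace_at (K i) x a b)"
    using s G by (fastforce simp: H_def supporting_halfspace_at_def closed_halfspace_def normal_cone_def)
  have "(\<Inter>i\<in>{1..n}. \<Inter>(a, b)\<in>H i. closed_halfspace a b) \<subseteq> {y. e \<bullet> y = e \<bullet> x}"
  proof (rule order_trans[OF _ cut], intro subsetI INT_I)
    fix y i g
    assume "y \<in> (\<Inter>i\<in>{1..n}. \<Inter>(a, b)\<in>H i. closed_halfspace a b)" "i \<in> {1..n}" "g \<in> G i"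
    then show "y \<in> {y. g \<bullet> y \<le> g \<bullet> x}"
      by (cases "g = 0") (auto simp: H_def closed_halfspace_def)
  qed
  then have "aff_dim (\<Inter>i\<in>{1..n}. \<Inter>(a, b)\<in>H i. closed_halfspace a b) \<le> aff_dim {y. e \<bullet> y = e \<bullet> x}"
    by (rule aff_dim_subset)
  also have "\<dots> < int DIM('a)"
    using e by simp
  finally show ?thesis
    using supporting by blast
qed

end
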